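(* Let $p\in\{3,5\}$ and let $H=(a_1,\dots,a_p)^\perp$ be a hyperplane of $\mathbb{R}^p$. If $v\in\mathbb{R}^p$ has pairwise distinct coordinates not summing to $0$, then $|H\cap S_pv|\leq (p-1)!$.
   Context: $S_p$ acts on $\mathbb{R}^p$ by permuting coordinates and $S_pv$ is the orbit of $v$. $(a_1,\dots,a_p)^\perp$ denotes the hyperplane $\{x:\sum_k a_kx_k=0\}$ with $(a_1,\dots,a_p)\neq 0$. *)

theory Defs
  imports "HOL-Analysis.Analysis" "HOL-Combinatorics.Permutations"
begin

text \<open>Vectors of R^p are represented as functions nat => real vanishing outside {..<p}.\<close>

definition vecs :: "nat \<Rightarrow> (nat \<Rightarrow> real) set" where
  "vecs p = {x. \<forall>i\<ge>p. x i = 0}"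

definition orbit_Sp :: "nat \<Rightarrow> (nat \<Rightarrow> real) \<Rightarrow> (nat \<Rightarrow> real) set" where
  "orbit_Sp p v = {(\<lambda>i. v (\<sigma> i)) | \<sigma>. \<sigma> permutes {..<p}}"

definition hyperplane :: "nat \<Rightarrow> (nat \<Rightarrow> real) \<Rightarrow> (nat \<Rightarrow> real) set" where
  "hyperplane p a = {x \<in> vecs p. (\<Sum>k<p. a k * x k) = 0}"

end

theory Submission
  imports Defs
begin

text \<open>Sort v increasingly and count permutations \<sigma> with \<Sum>_k a(k) v(\<sigma> k) = 0 instead of orbit
points. If a attains its maximum at a single index i, raising \<sigma> i by one (swapping it with the
value just above) strictly increases the sum. The permutations thus split into chains ending at
some \<sigma> with \<sigma> i = p - 1; each chain contains at most one zero, so there are at most (p - 1)!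
zeros. For p = 5 and a maximum attained at two indices x, y, the pair (\<sigma> x, \<sigma> y) is moved
along four L-shaped lattice paths, each giving at most 3! zeros. Replacing a by -a handles the
minimum; if neither extreme is attained few enough times, then for p \<in> {3, 5} the two sets of
extremal indices meet, a is constant, and the sum is a nonzero multiple of \<Sum>_k v(k).\<close>

lemma card_level_set_le_card_terminal:
  fixes step :: "'a \<Rightarrow> 'a" and height :: "'a \<Rightarrow> nat" and f :: "'a \<Rightarrow> 'b::linorder"
  assumes step_in: "\<And>x. x \<in> X \<Longrightarrow> 0 < height x \<Longrightarrow> step x \<in> X"
    and height_step: "\<And>x. x \<in> X \<Longrightarrow> 0 < height x \<Longrightarrow> height (step x) = height x - 1"
    and f_step: "\<And>x. x \<in> X \<Longrightarrow> 0 < height x \<Longrightarrow> f x < f (step x)"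
    and step_inj: "inj_on step {x \<in> X. 0 < height x}"
    and F: "finite F" "\<And>x. x \<in> X \<Longrightarrow> height x = 0 \<Longrightarrow> x \<in> F"
  shows "card {x \<in> X. f x = \<beta>} \<le> card F"
proof -
  have iterate: "(step ^^ i) x \<in> X \<and> height ((step ^^ i) x) = height x - i"
    if "x \<in> X" "i \<le> height x" for x i
    using that by (induction i) (auto simp: step_in height_step)
  have iterate_inj: "(step ^^ i) x = (step ^^ i) y \<Longrightarrow> x = y"
    if "x \<in> X" "y \<in> X" "height x = height y" "i \<le> height x" for x y i
    using that(4)
  proof (induction i)
    case (Suc i)
    have "(step ^^ i) x \<in> {x \<in> X. 0 < height x}" "(step ^^ i) y \<in> {x \<in> X. 0 < height x}"
      using iterate[of x i] iterate[of y i] that Suc.prems by auto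
    with Suc show ?case by (auto dest: inj_onD[OF step_inj])
  qed simp
  have f_iterate: "f x < f ((step ^^ i) x)" if "x \<in> X" "0 < i" "i \<le> height x" for x i
    using that(2,3)
  proof (induction i rule: nat_induct_non_zero)
    case 1
    then show ?case using that f_step by simp
  next
    case (Suc i)
    then show ?case using iterate[OF that(1), of i] f_step[of "(step ^^ i) x"] by force
  qed
  define terminal where "terminal x = (step ^^ height x) x" for x
  \<comment> \<open>Along a chain f increases strictly, so each chain meets a level set at most once.\<close>
  have "inj_on terminal {x \<in> X. f x = \<beta>}"
  proof (rule inj_onI)
    have one_way: "x = y" if "x \<in> X" "y \<in> X" "f x = f y" "height y \<le> height x"
      and "terminal x = terminal y" for x y
    proof -
      define d where "d = height x - height y"
      have x': "(step ^^ d) x \<in> X" "height ((step ^^ d) x) = height y"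
        using iterate[of x d] that unfolding d_def by auto
      have "(step ^^ height y) ((step ^^ d) x) = (step ^^ (height y + d)) x"
        by (simp add: funpow_add)
      also have "\<dots> = (step ^^ height y) y"
        using \<open>terminal x = terminal y\<close> that(4) by (simp add: terminal_def d_def)
      finally have "(step ^^ d) x = y"
        using iterate_inj[OF x'(1) that(2) x'(2), of "height y"] x'(2) by simp
      then show ?thesis using f_iterate[of x d] that unfolding d_def
        by (cases "d = 0") (auto simp: d_def)
    qed
    fix x y assume "x \<in> {x \<in> X. f x = \<beta>}" "y \<in> {x \<in> X. f x = \<beta>}" "terminal x = terminal y"
    then show "x = y" using one_way[of x y] one_way[of y x] by (cases "height y \<le> height x") auto
  qed
  moreover have "terminal ` {x \<in> X. f x = \<beta>} \<subseteq> F"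
    using iterate F(2) by (auto simp: terminal_def)
  ultimately show ?thesis using F(1) by (rule card_inj_on_le)
qed

lemma card_permutes_fixing_le:
  assumes "finite S" "A \<subseteq> S" "finite A"
  shows "card {\<sigma>. \<sigma> permutes S \<and> (\<forall>i\<in>A. \<sigma> i = c i)} \<le> fact (card S - card A)"
  using assms(3,2,1)
proof (induction A arbitrary: S c rule: finite_induct)
  case empty
  then show ?case by (simp add: card_permutations)
next
  case (insert a A)
  let ?T = "S - {a}"
  let ?t = "Transposition.transpose a (c a)"
  let ?P = "{\<sigma>. \<sigma> permutes S \<and> (\<forall>i\<in>insert a A. \<sigma> i = c i)}"
  let ?Q = "{\<tau>. \<tau> permutes ?T \<and> (\<forall>i\<in>A. \<tau> i = ?t (c i))}"
  \<comment> \<open>Composing with the transposition of a and c a fixes a, so the value at a can be dropped.\<close>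
  have "inj_on ((\<circ>) ?t) ?P"
    using fun.inj_map[OF inj_transpose] by (rule inj_on_subset) simp
  moreover have "(\<circ>) ?t ` ?P \<subseteq> ?Q"
  proof (rule image_subsetI)
    fix \<sigma> assume "\<sigma> \<in> ?P"
    moreover have "S = insert a ?T" using insert.prems by auto
    ultimately show "?t \<circ> \<sigma> \<in> ?Q" using permutes_insert_lemma[of \<sigma> a ?T] by auto
  qed
  moreover have "finite ?Q"
    using finite_permutations[of ?T] insert.prems by (auto elim: rev_finite_subset)
  ultimately have "card ?P \<le> card ?Q" by (rule card_inj_on_le)
  also have "\<dots> \<le> fact (card ?T - card A)" by (rule insert.IH) (use insert in auto)
  also have "card ?T - card A = card S - card (insert a A)"
    using insert by (simp add: card_Diff_singleton)
  finally show ?case .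
qed

definition pairing :: "nat \<Rightarrow> (nat \<Rightarrow> real) \<Rightarrow> (nat \<Rightarrow> real) \<Rightarrow> (nat \<Rightarrow> nat) \<Rightarrow> real" where
  "pairing p a v \<sigma> = (\<Sum>k<p. a k * v (\<sigma> k))"

definition raise :: "(nat \<Rightarrow> nat) \<Rightarrow> nat \<Rightarrow> nat \<Rightarrow> nat" where
  "raise \<sigma> i = Transposition.transpose (\<sigma> i) (Suc (\<sigma> i)) \<circ> \<sigma>"

lemma raise_same [simp]: "raise \<sigma> i i = Suc (\<sigma> i)"
  by (simp add: raise_def)

lemma raise_other: "\<sigma> k \<noteq> \<sigma> i \<Longrightarrow> \<sigma> k \<noteq> Suc (\<sigma> i) \<Longrightarrow> raise \<sigma> i k = \<sigma> k"
  by (simp add: raise_def)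

lemma raise_permutes: "\<sigma> permutes {..<p} \<Longrightarrow> Suc (\<sigma> i) < p \<Longrightarrow> raise \<sigma> i permutes {..<p}"
  unfolding raise_def by (rule permutes_compose) (auto intro: permutes_swap_id)

lemma raise_inj: "raise \<sigma> i = raise \<tau> i \<Longrightarrow> \<sigma> = \<tau>"
proof -
  assume eq: "raise \<sigma> i = raise \<tau> i"
  then have "\<sigma> i = \<tau> i" using raise_same by (metis Suc_inject)
  then have "Transposition.transpose (\<sigma> i) (Suc (\<sigma> i)) \<circ> \<sigma> = Transposition.transpose (\<sigma> i) (Suc (\<sigma> i)) \<circ> \<tau>"
    using eq by (simp add: raise_def)
  then show "\<sigma> = \<tau>" by (rule injD[OF fun.inj_map[OF inj_transpose]])
qed

lemma pairing_raise:
  assumes \<sigma>: "\<sigma> permutes {..<p}" and "i < p" "j < p" and j: "\<sigma> j = Suc (\<sigma> i)"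
  shows "pairing p a v (raise \<sigma> i) = pairing p a v \<sigma> + (a i - a j) * (v (Suc (\<sigma> i)) - v (\<sigma> i))"
proof -
  have "i \<noteq> j" using j by auto
  have moved: "raise \<sigma> i k = \<sigma> k" if "k \<noteq> i" "k \<noteq> j" for k
    using that j injD[OF permutes_inj[OF \<sigma>]] by (intro raise_other) metis+
  have "raise \<sigma> i j = \<sigma> i" using j by (simp add: raise_def)
  then have "pairing p a v (raise \<sigma> i) - pairing p a v \<sigma> =
      (\<Sum>k\<in>{i, j}. a k * v (raise \<sigma> i k) - a k * v (\<sigma> k))"
    unfolding pairing_def sum_subtractf[symmetric]
    using \<open>i < p\<close> \<open>j < p\<close> moved by (intro sum.mono_neutral_right) auto
  also have "\<dots> = (a i - a j) * (v (Suc (\<sigma> i)) - v (\<sigma> i))"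
    using \<open>i \<noteq> j\<close> \<open>raise \<sigma> i j = \<sigma> i\<close> j by (simp add: algebra_simps)
  finally show ?thesis by simp
qed

lemma pairing_raise_gt:
  assumes v: "strict_mono_on {..<p} v" and \<sigma>: "\<sigma> permutes {..<p}" and "Suc (\<sigma> i) < p"
    and a: "\<And>j. j < p \<Longrightarrow> \<sigma> j = Suc (\<sigma> i) \<Longrightarrow> a j < a i"
  shows "pairing p a v \<sigma> < pairing p a v (raise \<sigma> i)"
proof -
  obtain j where j: "j < p" "\<sigma> j = Suc (\<sigma> i)"
    using permutes_image[OF \<sigma>] \<open>Suc (\<sigma> i) < p\<close> by (metis imageE lessThan_iff)
  have "i < p" using \<open>Suc (\<sigma> i) < p\<close> permutes_not_in[OF \<sigma>, of i] by (cases "i < p") auto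
  have "0 < (a i - a j) * (v (Suc (\<sigma> i)) - v (\<sigma> i))"
    using a[OF j] strict_mono_onD[OF v, of "\<sigma> i" "Suc (\<sigma> i)"] \<open>Suc (\<sigma> i) < p\<close> by simp
  then show ?thesis using pairing_raise[OF \<sigma> \<open>i < p\<close> j] by simp
qed

definition zero_perms :: "nat \<Rightarrow> (nat \<Rightarrow> real) \<Rightarrow> (nat \<Rightarrow> real) \<Rightarrow> (nat \<Rightarrow> nat) set" where
  "zero_perms p a v = {\<sigma>. \<sigma> permutes {..<p} \<and> pairing p a v \<sigma> = 0}"

lemma finite_zero_perms [simp]: "finite (zero_perms p a v)"
  using finite_permutations[of "{..<p}"] by (auto simp: zero_perms_def elim: rev_finite_subset)

lemma card_zero_perms_unique_max:
  assumes v: "strict_mono_on {..<p} v" and "i < p"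
    and a: "\<And>j. j < p \<Longrightarrow> j \<noteq> i \<Longrightarrow> a j < a i"
  shows "card (zero_perms p a v) \<le> fact (p - 1)"
proof -
  let ?X = "{\<sigma>. \<sigma> permutes {..<p}}"
  let ?F = "{\<sigma>. \<sigma> permutes {..<p} \<and> (\<forall>k\<in>{i}. \<sigma> k = p - 1)}"
  have "card {\<sigma> \<in> ?X. pairing p a v \<sigma> = 0} \<le> card ?F"
  proof (rule card_level_set_le_card_terminal
      [where step = "\<lambda>\<sigma>. raise \<sigma> i" and height = "\<lambda>\<sigma>. p - 1 - \<sigma> i"])
    fix \<sigma> assume "\<sigma> \<in> ?X" "0 < p - 1 - \<sigma> i"
    then have \<sigma>: "\<sigma> permutes {..<p}" and "Suc (\<sigma> i) < p" by auto
    show "raise \<sigma> i \<in> ?X" using raise_permutes[OF \<sigma> \<open>Suc (\<sigma> i) < p\<close>] by simp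
    show "p - 1 - raise \<sigma> i i = p - 1 - \<sigma> i - 1" by simp
    show "pairing p a v \<sigma> < pairing p a v (raise \<sigma> i)"
      using pairing_raise_gt[OF v \<sigma> \<open>Suc (\<sigma> i) < p\<close>] a by (metis n_not_Suc_n)
  next
    show "inj_on (\<lambda>\<sigma>. raise \<sigma> i) {\<sigma> \<in> ?X. 0 < p - 1 - \<sigma> i}"
      by (auto intro: inj_onI raise_inj)
  next
    show "finite ?F"
      using finite_permutations[of "{..<p}"] by (auto elim: rev_finite_subset)
  next
    fix \<sigma> assume "\<sigma> \<in> ?X" "p - 1 - \<sigma> i = 0"
    then show "\<sigma> \<in> ?F" using permutes_in_image[of \<sigma> "{..<p}" i] \<open>i < p\<close> by auto
  qed
  also have "\<dots> \<le> fact (card {..<p} - card {i})"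
    using card_permutes_fixing_le[of "{..<p}" "{i}" "\<lambda>_. p - 1"] \<open>i < p\<close> by simp
  finally show ?thesis by (simp add: zero_perms_def)
qed

lemma card_zero_perms_L_path:
  assumes v: "strict_mono_on {..<p} v" and xy: "x < p" "y < p" "x \<noteq> y"
    and a: "\<And>j. j < p \<Longrightarrow> j \<noteq> x \<Longrightarrow> j \<noteq> y \<Longrightarrow> a j < a x \<and> a j < a y"
    and path: "s0 < r0" "r0 \<le> m" "s0 \<le> n" "n < m" "m < p"
  shows "card {\<sigma> \<in> zero_perms p a v.
           \<sigma> y = s0 \<and> r0 \<le> \<sigma> x \<and> \<sigma> x \<le> m \<or> \<sigma> x = m \<and> s0 \<le> \<sigma> y \<and> \<sigma> y \<le> n}
         \<le> fact (p - 2)" (is "card ?Z \<le> _")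
proof -
  \<comment> \<open>The pair (\<sigma> x, \<sigma> y) runs right from (r0, s0) to (m, s0), then up to (m, n);
    away from the corner the other coordinate never gets in the way of a raise.\<close>
  define on_path where "on_path \<sigma> \<longleftrightarrow>
    \<sigma> y = s0 \<and> r0 \<le> \<sigma> x \<and> \<sigma> x \<le> m \<or> \<sigma> x = m \<and> s0 \<le> \<sigma> y \<and> \<sigma> y \<le> n" for \<sigma> :: "nat \<Rightarrow> nat"
  define step where "step \<sigma> = (if \<sigma> x < m then raise \<sigma> x else raise \<sigma> y)" for \<sigma>
  define height where "height \<sigma> = (m - \<sigma> x) + (n - \<sigma> y)" for \<sigma> :: "nat \<Rightarrow> nat"
  let ?X = "{\<sigma>. \<sigma> permutes {..<p} \<and> on_path \<sigma>}"
  let ?F = "{\<sigma>. \<sigma> permutes {..<p} \<and> (\<forall>k\<in>{x, y}. \<sigma> k = (if k = x then m else n))}"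
  have raise_path: "raise \<sigma> i permutes {..<p} \<and> raise \<sigma> i k = \<sigma> k \<and>
      pairing p a v \<sigma> < pairing p a v (raise \<sigma> i)"
    if \<sigma>: "\<sigma> permutes {..<p}" and ik: "{i, k} = {x, y}" and i: "Suc (\<sigma> i) < p"
      and k: "\<sigma> k \<noteq> \<sigma> i" "\<sigma> k \<noteq> Suc (\<sigma> i)" for \<sigma> i k
  proof (intro conjI)
    show "raise \<sigma> i permutes {..<p}" using raise_permutes[OF \<sigma> i] .
    show "raise \<sigma> i k = \<sigma> k" using k by (rule raise_other)
    have "a j < a i" if "j < p" "\<sigma> j = Suc (\<sigma> i)" for j
    proof -
      have "j \<noteq> i" "j \<noteq> k" using that k by auto
      then show ?thesis using a[OF \<open>j < p\<close>] ik by (auto simp: doubleton_eq_iff)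
    qed
    then show "pairing p a v \<sigma> < pairing p a v (raise \<sigma> i)" using pairing_raise_gt[OF v \<sigma> i] by blast
  qed
  have right: "\<sigma> y = s0 \<and> r0 \<le> \<sigma> x" if "\<sigma> \<in> ?X" "\<sigma> x < m" for \<sigma>
    using that by (auto simp: on_path_def)
  have up: "\<sigma> x = m \<and> s0 \<le> \<sigma> y \<and> \<sigma> y < n" if "\<sigma> \<in> ?X" "\<not> \<sigma> x < m" "0 < height \<sigma>" for \<sigma>
    using that by (auto simp: on_path_def height_def)
  have step: "step \<sigma> \<in> ?X \<and> height (step \<sigma>) = height \<sigma> - 1 \<and>
      pairing p a v \<sigma> < pairing p a v (step \<sigma>) \<and>
      step \<sigma> y = (if \<sigma> x < m then s0 else Suc (\<sigma> y))"
    if X: "\<sigma> \<in> ?X" and h: "0 < height \<sigma>" for \<sigma>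
  proof (cases "\<sigma> x < m")
    case True
    then show ?thesis using right[OF X True] raise_path[of \<sigma> x y] X path xy(3)
      by (auto simp: step_def height_def on_path_def)
  next
    case False
    then show ?thesis using up[OF X False h] raise_path[of \<sigma> y x] X path xy(3)
      by (auto simp: step_def height_def on_path_def insert_commute)
  qed
  have "card {\<sigma> \<in> ?X. pairing p a v \<sigma> = 0} \<le> card ?F"
  proof (rule card_level_set_le_card_terminal[where step = step and height = height])
    show "\<And>\<sigma>. \<sigma> \<in> ?X \<Longrightarrow> 0 < height \<sigma> \<Longrightarrow> step \<sigma> \<in> ?X"
      and "\<And>\<sigma>. \<sigma> \<in> ?X \<Longrightarrow> 0 < height \<sigma> \<Longrightarrow> height (step \<sigma>) = height \<sigma> - 1"
      and "\<And>\<sigma>. \<sigma> \<in> ?X \<Longrightarrow> 0 < height \<sigma> \<Longrightarrow> pairing p a v \<sigma> < pairing p a v (step \<sigma>)"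
      using step by blast+
  next
    show "inj_on step {\<sigma> \<in> ?X. 0 < height \<sigma>}"
    proof (rule inj_onI)
      fix \<sigma> \<tau> assume \<sigma>: "\<sigma> \<in> {\<sigma> \<in> ?X. 0 < height \<sigma>}" and \<tau>: "\<tau> \<in> {\<sigma> \<in> ?X. 0 < height \<sigma>}"
        and eq: "step \<sigma> = step \<tau>"
      \<comment> \<open>A step along the first leg keeps \<sigma> y = s0, one along the second lifts it above s0.\<close>
      have "\<sigma> x < m \<longleftrightarrow> \<tau> x < m"
        using step[of \<sigma>] step[of \<tau>] up[of \<sigma>] up[of \<tau>] \<sigma> \<tau> arg_cong[OF eq, of "\<lambda>\<rho>. \<rho> y"]
        by (auto split: if_splits)
      then show "\<sigma> = \<tau>" using eq by (auto simp: step_def split: if_splits dest: raise_inj)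
    qed
  next
    show "finite ?F"
      using finite_permutations[of "{..<p}"] by (auto elim: rev_finite_subset)
  next
    fix \<sigma> assume "\<sigma> \<in> ?X" "height \<sigma> = 0"
    then show "\<sigma> \<in> ?F" using path by (auto simp: on_path_def height_def)
  qed
  also have "\<dots> \<le> fact (card {..<p} - card {x, y})"
    using card_permutes_fixing_le[of "{..<p}" "{x, y}" "\<lambda>k. if k = x then m else n"] xy by simp
  finally have "card {\<sigma> \<in> ?X. pairing p a v \<sigma> = 0} \<le> fact (p - 2)"
    using xy(3) by (simp add: numeral_2_eq_2)
  moreover have "?Z = {\<sigma> \<in> ?X. pairing p a v \<sigma> = 0}" by (auto simp: zero_perms_def on_path_def)
  ultimately show ?thesis by simp
qed

lemma card_zero_perms_two_max:
  assumes v: "strict_mono_on {..<5} v" and xy: "x < 5" "y < 5" "x \<noteq> y"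
    and a: "\<And>j. j < 5 \<Longrightarrow> j \<noteq> x \<Longrightarrow> j \<noteq> y \<Longrightarrow> a j < a x \<and> a j < a y"
  shows "card (zero_perms 5 a v) \<le> fact 4"
proof -
  define path where "path x y r0 s0 m n = {\<sigma> \<in> zero_perms 5 a v.
    \<sigma> y = s0 \<and> r0 \<le> \<sigma> x \<and> \<sigma> x \<le> m \<or> \<sigma> x = m \<and> s0 \<le> \<sigma> y \<and> \<sigma> y \<le> n}"
    for x y r0 s0 m n :: nat
  have path_le: "card (path x' y' r0 s0 m n) \<le> fact 3"
    if "x' < 5" "y' < 5" "x' \<noteq> y'"
      and "\<And>j. j < 5 \<Longrightarrow> j \<noteq> x' \<Longrightarrow> j \<noteq> y' \<Longrightarrow> a j < a x' \<and> a j < a y'"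
      and "s0 < r0" "r0 \<le> m" "s0 \<le> n" "n < m" "m < 5" for x' y' r0 s0 m n
    using card_zero_perms_L_path[OF v that] by (simp add: path_def)
  have a': "\<And>j. j < 5 \<Longrightarrow> j \<noteq> y \<Longrightarrow> j \<noteq> x \<Longrightarrow> a j < a y \<and> a j < a x"
    using a by blast
  \<comment> \<open>The ten pairs \<sigma> y < \<sigma> x below 5 form the L-shaped paths (1,0)-(4,0)-(4,3) and (2,1)-(3,1)-(3,2).\<close>
  let ?A = "path x y 1 0 4 3" and ?B = "path x y 2 1 3 2"
    and ?C = "path y x 1 0 4 3" and ?D = "path y x 2 1 3 2"
  have cover: "((s = 0 \<and> 1 \<le> r \<and> r \<le> 4 \<or> r = 4 \<and> 0 \<le> s \<and> s \<le> 3)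
        \<or> (s = 1 \<and> 2 \<le> r \<and> r \<le> 3 \<or> r = 3 \<and> 1 \<le> s \<and> s \<le> 2))
      \<or> ((r = 0 \<and> 1 \<le> s \<and> s \<le> 4 \<or> s = 4 \<and> 0 \<le> r \<and> r \<le> 3)
        \<or> (r = 1 \<and> 2 \<le> s \<and> s \<le> 3 \<or> s = 3 \<and> 1 \<le> r \<and> r \<le> 2))"
    if "r < 5" "s < 5" "r \<noteq> s" for r s :: nat
    using that by (auto simp: less_Suc_eq numeral_eq_Suc)
  have "zero_perms 5 a v \<subseteq> (?A \<union> ?B) \<union> (?C \<union> ?D)"
  proof
    fix \<sigma> assume \<sigma>: "\<sigma> \<in> zero_perms 5 a v"
    then have "\<sigma> x < 5" "\<sigma> y < 5" "\<sigma> x \<noteq> \<sigma> y"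
      using xy permutes_in_image[of \<sigma> "{..<5}"] permutes_inj[of \<sigma> "{..<5}"]
      by (auto simp: zero_perms_def inj_eq)
    with \<sigma> show "\<sigma> \<in> (?A \<union> ?B) \<union> (?C \<union> ?D)"
      using cover[of "\<sigma> x" "\<sigma> y"] unfolding path_def by blast
  qed
  then have "card (zero_perms 5 a v) \<le> card ((?A \<union> ?B) \<union> (?C \<union> ?D))"
    by (rule card_mono[rotated]) (simp add: path_def)
  also have "\<dots> \<le> (card ?A + card ?B) + (card ?C + card ?D)"
    using card_Un_le[of "?A \<union> ?B" "?C \<union> ?D"] card_Un_le[of ?A ?B] card_Un_le[of ?C ?D] by linarith
  also have "\<dots> \<le> (fact 3 + fact 3) + (fact 3 + fact 3)"
    using path_le[OF xy a] path_le[OF xy(2,1) xy(3)[symmetric] a'] by (intro add_mono) auto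
  finally show ?thesis by (simp add: fact_numeral)
qed

lemma card_zero_perms_few_maximizers:
  assumes v: "strict_mono_on {..<p} v"
    and I: "I \<subseteq> {..<p}" "card I = 1 \<or> p = 5 \<and> card I = 2"
    and a: "\<And>i j. i \<in> I \<Longrightarrow> j < p \<Longrightarrow> j \<notin> I \<Longrightarrow> a j < a i"
  shows "card (zero_perms p a v) \<le> fact (p - 1)"
  using I(2)
proof
  assume "card I = 1"
  then obtain i where "I = {i}" by (rule card_1_singletonE)
  then show ?thesis using card_zero_perms_unique_max[OF v, of i a] I(1) a by auto
next
  assume "p = 5 \<and> card I = 2"
  then obtain x y where "p = 5" "x \<noteq> y" "I = {x, y}" by (meson card_2_iff)
  then show ?thesis using card_zero_perms_two_max[of v x y a] v I(1) a by auto
qed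

lemma zero_perms_uminus: "zero_perms p (\<lambda>k. - a k) v = zero_perms p a v"
  by (simp add: zero_perms_def pairing_def sum_negf)

lemma zero_perms_const:
  assumes "\<And>k. k < p \<Longrightarrow> a k = c" "c \<noteq> 0" "(\<Sum>k<p. v k) \<noteq> 0"
  shows "zero_perms p a v = {}"
proof -
  have "pairing p a v \<sigma> = c * (\<Sum>k<p. v k)" if "\<sigma> permutes {..<p}" for \<sigma>
    using assms(1) sum.permute[OF that, of v]
    by (simp add: pairing_def sum_distrib_left comp_def)
  then show ?thesis using assms(2,3) by (auto simp: zero_perms_def)
qed

lemma card_zero_perms_sorted:
  assumes p: "p \<in> {3, 5}" and a: "a \<in> vecs p" "a \<noteq> (\<lambda>_. 0)"
    and v: "strict_mono_on {..<p} v" and sum: "(\<Sum>k<p. v k) \<noteq> 0"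
  shows "card (zero_perms p a v) \<le> fact (p - 1)"
proof -
  define I where "I = {i. i < p \<and> (\<forall>j<p. a j \<le> a i)}"
  define J where "J = {i. i < p \<and> (\<forall>j<p. a i \<le> a j)}"
  have "{..<p} \<noteq> {}" using p by (auto simp: lessThan_empty_iff)
  then obtain i_max i_min where
    "is_arg_min (\<lambda>i. - a i) (\<lambda>i. i \<in> {..<p}) i_max" "is_arg_min a (\<lambda>i. i \<in> {..<p}) i_min"
    using ex_is_arg_min_if_finite[of "{..<p}"] by (metis finite_lessThan)
  then have "I \<noteq> {}" "J \<noteq> {}" by (auto simp: I_def J_def is_arg_min_linorder)
  have I_max: "a j < a i" if "i \<in> I" "j < p" "j \<notin> I" for i j
    using that by (force simp: I_def)
  have J_min: "- a j < - a i" if "i \<in> J" "j < p" "j \<notin> J" for i j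
    using that by (force simp: J_def)
  show ?thesis
  proof (cases "I \<inter> J = {}")
    case True
    have "finite I" "finite J" "I \<union> J \<subseteq> {..<p}" by (auto simp: I_def J_def)
    then have "card I + card J \<le> p" using True card_mono[of "{..<p}" "I \<union> J"]
      by (simp add: card_Un_disjoint)
    \<comment> \<open>Two disjoint nonempty subsets of a set of 3 or 5 indices: one of them has at most (p - 1) / 2 elements.\<close>
    moreover have "card I \<noteq> 0" "card J \<noteq> 0"
      using \<open>finite I\<close> \<open>finite J\<close> \<open>I \<noteq> {}\<close> \<open>J \<noteq> {}\<close> by simp_all
    ultimately have "card I = 1 \<or> p = 5 \<and> card I = 2 \<or> card J = 1 \<or> p = 5 \<and> card J = 2"
      using p by auto
    moreover have "I \<subseteq> {..<p}" "J \<subseteq> {..<p}" by (auto simp: I_def J_def)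
    ultimately show ?thesis
      using card_zero_perms_few_maximizers[OF v, of I a] I_max
        card_zero_perms_few_maximizers[OF v, of J "\<lambda>k. - a k"] J_min
      by (auto simp: zero_perms_uminus)
  next
    case False
    then obtain i where "i \<in> I" "i \<in> J" by blast
    then have const: "a k = a i" if "k < p" for k
      using that by (force simp: I_def J_def)
    have "a i \<noteq> 0"
    proof
      assume "a i = 0"
      have "a k = 0" for k
        using const[of k] a(1) \<open>a i = 0\<close> by (cases "k < p") (auto simp: vecs_def)
      then have "a = (\<lambda>_. 0)" by (rule ext)
      with a(2) show False by contradiction
    qed
    then show ?thesis using zero_perms_const[OF const _ sum] by simp
  qed
qed

lemma obtain_sorting_permutation:
  fixes v :: "nat \<Rightarrow> 'a::linorder"
  assumes inj: "inj_on v {..<p}"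
  obtains \<pi> where "\<pi> permutes {..<p}" "strict_mono_on {..<p} (v \<circ> \<pi>)"
proof
  let ?xs = "sorted_list_of_set (v ` {..<p})"
  define \<pi> where "\<pi> k = (if k < p then inv_into {..<p} v (?xs ! k) else k)" for k
  have "length ?xs = p" using card_image[OF inj] by simp
  then have "bij_betw ((!) ?xs) {..<p} (v ` {..<p})" by (intro bij_betw_nth) simp_all
  moreover have "bij_betw (inv_into {..<p} v) (v ` {..<p}) {..<p}"
    using inj by (simp add: bij_betw_inv_into inj_on_imp_bij_betw)
  ultimately have "bij_betw (inv_into {..<p} v \<circ> (!) ?xs) {..<p} {..<p}" by (rule bij_betw_trans)
  then have "bij_betw \<pi> {..<p} {..<p}" by (rule bij_betw_cong[THEN iffD1, rotated]) (simp add: \<pi>_def)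
  then show "\<pi> permutes {..<p}" by (rule bij_imp_permutes) (simp add: \<pi>_def)
  have "v (\<pi> k) = ?xs ! k" if "k < p" for k
    using that \<open>length ?xs = p\<close> nth_mem[of k ?xs] by (simp add: \<pi>_def f_inv_into_f)
  moreover have "?xs ! r < ?xs ! s" if "r < s" "s < p" for r s
    using that \<open>length ?xs = p\<close> by (metis sorted_wrt_nth_less strict_sorted_list_of_set)
  ultimately show "strict_mono_on {..<p} (v \<circ> \<pi>)" by (auto intro!: strict_mono_onI)
qed

lemma card_zero_perms_le_reorder:
  assumes \<pi>: "\<pi> permutes {..<p}"
  shows "card (zero_perms p a v) \<le> card (zero_perms p a (v \<circ> \<pi>))"
proof (rule card_inj_on_le[where f = "(\<circ>) (inv \<pi>)"])
  show "inj_on ((\<circ>) (inv \<pi>)) (zero_perms p a v)"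
    using fun.inj_map[OF permutes_inj[OF permutes_inv[OF \<pi>]]] by (rule inj_on_subset) simp
  show "(\<circ>) (inv \<pi>) ` zero_perms p a v \<subseteq> zero_perms p a (v \<circ> \<pi>)"
    using \<pi> by (auto simp: zero_perms_def pairing_def permutes_inverses(1)
        intro: permutes_compose permutes_inv)
qed simp

lemma card_hyperplane_orbit_le:
  "card (hyperplane p a \<inter> orbit_Sp p v) \<le> card (zero_perms p a v)"
proof -
  have "hyperplane p a \<inter> orbit_Sp p v \<subseteq> (\<lambda>\<sigma> i. v (\<sigma> i)) ` zero_perms p a v"
  proof
    fix x assume "x \<in> hyperplane p a \<inter> orbit_Sp p v"
    then obtain \<sigma> where "\<sigma> permutes {..<p}" "x = (\<lambda>i. v (\<sigma> i))" "(\<Sum>k<p. a k * x k) = 0"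
      unfolding hyperplane_def orbit_Sp_def by blast
    then show "x \<in> (\<lambda>\<sigma> i. v (\<sigma> i)) ` zero_perms p a v"
      unfolding zero_perms_def pairing_def by blast
  qed
  then have "card (hyperplane p a \<inter> orbit_Sp p v) \<le> card ((\<lambda>\<sigma> i. v (\<sigma> i)) ` zero_perms p a v)"
    by (rule card_mono[rotated]) simp
  also have "\<dots> \<le> card (zero_perms p a v)" by (rule card_image_le) simp
  finally show ?thesis .
qed

theorem corollary4p5:
  fixes p :: nat and a v :: "nat \<Rightarrow> real"
  assumes "p \<in> {3, 5}"
    and "a \<in> vecs p" and "a \<noteq> (\<lambda>_. 0)"
    and "v \<in> vecs p"
    and "inj_on v {..<p}"
    and "(\<Sum>k<p. v k) \<noteq> 0"
  shows "card (hyperplane p a \<inter> orbit_Sp p v) \<le> fact (p - 1)"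
proof -
  obtain \<pi> where \<pi>: "\<pi> permutes {..<p}" "strict_mono_on {..<p} (v \<circ> \<pi>)"
    using obtain_sorting_permutation[OF assms(5)] .
  have "(\<Sum>k<p. (v \<circ> \<pi>) k) \<noteq> 0" using assms(6) sum.permute[OF \<pi>(1), of v] by metis
  have "card (hyperplane p a \<inter> orbit_Sp p v) \<le> card (zero_perms p a v)"
    by (rule card_hyperplane_orbit_le)
  also have "\<dots> \<le> card (zero_perms p a (v \<circ> \<pi>))"
    by (rule card_zero_perms_le_reorder[OF \<pi>(1)])
  also have "\<dots> \<le> fact (p - 1)"
    by (rule card_zero_perms_sorted[OF assms(1-3) \<pi>(2)]) fact
  finally show ?thesis .
qed

end
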